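(* $\mathrm{MA}_{\aleph_1}(\text{$\sigma$-linked})$ is equivalent to $\mathrm{MA}_{\aleph_1}(\text{$\aleph_1$-$\sigma$-linked})$, and $\mathrm{MA}_{\aleph_1}(\text{$\sigma$-centered})$ is equivalent to $\mathrm{MA}_{\aleph_1}(\text{$\aleph_1$-$\sigma$-centered})$.
   Context: A poset is $\sigma$-linked ($\sigma$-centered) if it is a countable union of linked (pairwise compatible) sets (centered sets: every finite subset has a common lower bound). A poset $\mathbb{P}$ is $\aleph_1$-$\sigma$-linked (resp. $\aleph_1$-$\sigma$-centered) if for every sequence $\langle p_\alpha:\alpha<\omega_1\rangle$ of conditions, $\{p_\alpha:\alpha<\omega_1\}$ is covered by countably many linked (resp. centered) subsets of $\mathbb{P}$. $\mathrm{MA}_{\aleph_1}(\Phi)$: for every poset with property $\Phi$ and every family of $\aleph_1$ dense subsets there is a filter meeting all of them. *)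

theory Defs imports Main begin

text \<open>A poset is given by a carrier P and a relation le (le q p means q extends p, q \<le> p).\<close>
definition poset :: "'a set \<Rightarrow> ('a \<Rightarrow> 'a \<Rightarrow> bool) \<Rightarrow> bool" where
  "poset P le \<longleftrightarrow> P \<noteq> {} \<and> (\<forall>p\<in>P. le p p)
     \<and> (\<forall>p\<in>P. \<forall>q\<in>P. \<forall>r\<in>P. le p q \<longrightarrow> le q r \<longrightarrow> le p r)
     \<and> (\<forall>p\<in>P. \<forall>q\<in>P. le p q \<longrightarrow> le q p \<longrightarrow> p = q)"

definition compatible :: "'a set \<Rightarrow> ('a \<Rightarrow> 'a \<Rightarrow> bool) \<Rightarrow> 'a \<Rightarrow> 'a \<Rightarrow> bool" where
  "compatible P le p q \<longleftrightarrow> (\<exists>r\<in>P. le r p \<and> le r q)"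

definition linked :: "'a set \<Rightarrow> ('a \<Rightarrow> 'a \<Rightarrow> bool) \<Rightarrow> 'a set \<Rightarrow> bool" where
  "linked P le A \<longleftrightarrow> A \<subseteq> P \<and> (\<forall>p\<in>A. \<forall>q\<in>A. compatible P le p q)"

definition centered :: "'a set \<Rightarrow> ('a \<Rightarrow> 'a \<Rightarrow> bool) \<Rightarrow> 'a set \<Rightarrow> bool" where
  "centered P le A \<longleftrightarrow> A \<subseteq> P \<and>
     (\<forall>F. finite F \<and> F \<subseteq> A \<longrightarrow> (\<exists>r\<in>P. \<forall>p\<in>F. le r p))"

definition sigma_linked :: "'a set \<Rightarrow> ('a \<Rightarrow> 'a \<Rightarrow> bool) \<Rightarrow> bool" where
  "sigma_linked P le \<longleftrightarrow> (\<exists>L :: nat \<Rightarrow> 'a set. (\<forall>n. linked P le (L n)) \<and> P = (\<Union>n. L n))"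

definition sigma_centered :: "'a set \<Rightarrow> ('a \<Rightarrow> 'a \<Rightarrow> bool) \<Rightarrow> bool" where
  "sigma_centered P le \<longleftrightarrow> (\<exists>L :: nat \<Rightarrow> 'a set. (\<forall>n. centered P le (L n)) \<and> P = (\<Union>n. L n))"

definition omega1 :: "nat set set" where
  "omega1 = Field (cardSuc natLeq)"

definition aleph1_sigma_linked :: "'a set \<Rightarrow> ('a \<Rightarrow> 'a \<Rightarrow> bool) \<Rightarrow> bool" where
  "aleph1_sigma_linked P le \<longleftrightarrow> (\<forall>p :: nat set \<Rightarrow> 'a. p ` omega1 \<subseteq> P \<longrightarrow>
     (\<exists>L :: nat \<Rightarrow> 'a set. (\<forall>n. linked P le (L n)) \<and> p ` omega1 \<subseteq> (\<Union>n. L n)))"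

definition aleph1_sigma_centered :: "'a set \<Rightarrow> ('a \<Rightarrow> 'a \<Rightarrow> bool) \<Rightarrow> bool" where
  "aleph1_sigma_centered P le \<longleftrightarrow> (\<forall>p :: nat set \<Rightarrow> 'a. p ` omega1 \<subseteq> P \<longrightarrow>
     (\<exists>L :: nat \<Rightarrow> 'a set. (\<forall>n. centered P le (L n)) \<and> p ` omega1 \<subseteq> (\<Union>n. L n)))"

definition dense :: "'a set \<Rightarrow> ('a \<Rightarrow> 'a \<Rightarrow> bool) \<Rightarrow> 'a set \<Rightarrow> bool" where
  "dense P le D \<longleftrightarrow> D \<subseteq> P \<and> (\<forall>p\<in>P. \<exists>d\<in>D. le d p)"

definition filter_in :: "'a set \<Rightarrow> ('a \<Rightarrow> 'a \<Rightarrow> bool) \<Rightarrow> 'a set \<Rightarrow> bool" where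
  "filter_in P le G \<longleftrightarrow> G \<subseteq> P \<and> G \<noteq> {}
     \<and> (\<forall>p\<in>G. \<forall>q\<in>P. le p q \<longrightarrow> q \<in> G)
     \<and> (\<forall>p\<in>G. \<forall>q\<in>G. \<exists>r\<in>G. le r p \<and> le r q)"

text \<open>MA_aleph1(Phi), for posets whose elements live in the type 'a (the type is arbitrary).\<close>
definition MA_aleph1 :: "('a set \<Rightarrow> ('a \<Rightarrow> 'a \<Rightarrow> bool) \<Rightarrow> bool) \<Rightarrow> bool" where
  "MA_aleph1 \<Phi> \<longleftrightarrow> (\<forall>P le. poset P le \<and> \<Phi> P le \<longrightarrow>
     (\<forall>D :: nat set \<Rightarrow> 'a set. (\<forall>\<alpha>\<in>omega1. dense P le (D \<alpha>)) \<longrightarrow>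
        (\<exists>G. filter_in P le G \<and> (\<forall>\<alpha>\<in>omega1. G \<inter> D \<alpha> \<noteq> {}))))"

end

theory Submission imports Defs begin

(* Only MA for aleph1-sigma-linked (centered) posets needs proof. Given such a poset P and
   aleph1 dense sets D_alpha, close one condition under Skolem functions choosing an extension
   in each D_alpha and a lower bound for each finite subset that is bounded in P. The closure Q
   has size at most aleph1, each D_alpha is dense in Q, and finite sets bounded in P are bounded
   in Q, so linked (centered) sets of P trace to linked (centered) sets of Q. Enumerating Q in
   order type omega1, the hypothesis covers Q by countably many such traces: Q is sigma-linked
   (centered). MA gives a filter of Q meeting every D_alpha, and its upward closure in P is the
   required filter. *)

unbundle cardinal_syntax

lemma infinite_omega1: "infinite omega1"
  unfolding omega1_def using cardSuc_finite[OF natLeq_Card_order] by (simp add: Field_natLeq)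

lemma finite_card_of_ordLeq_infinite:
  assumes "finite A" "infinite B" shows "|A| \<le>o |B|"
  by (meson assms card_of_Well_order card_of_ordLeq_finite ordLeq_total)

lemma card_of_Un_ordLeq_infinite:
  assumes "infinite C" "|A| \<le>o |C|" "|B| \<le>o |C|"
  shows "|A \<union> B| \<le>o |C|"
proof -
  have "A \<union> B = (\<Union>b\<in>UNIV. if b then A else B)" by auto
  moreover have "|UNIV :: bool set| \<le>o |C|"
    using assms(1) by (simp add: finite_card_of_ordLeq_infinite)
  ultimately show ?thesis
    using card_of_UNION_ordLeq_infinite[OF assms(1), of UNIV "\<lambda>b. if b then A else B"] assms(2,3)
    by simp
qed

lemma card_of_lists_ordLeq_infinite:
  assumes B: "infinite B" and A: "|A| \<le>o |B|"
  shows "|lists A| \<le>o |B|"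
proof -
  define lists_of_length where "lists_of_length n = {xs \<in> lists A. length xs = n}" for n
  have "|lists_of_length n| \<le>o |B|" for n
  proof (induction n)
    case 0
    have "lists_of_length 0 = {[]}" unfolding lists_of_length_def by auto
    then show ?case using B by (simp add: finite_card_of_ordLeq_infinite)
  next
    case (Suc n)
    have "lists_of_length (Suc n) = (\<Union>a\<in>A. Cons a ` lists_of_length n)"
      unfolding lists_of_length_def by (auto simp: length_Suc_conv image_iff)
    then show ?case
      using card_of_UNION_ordLeq_infinite[OF B A] card_of_image Suc.IH ordLeq_transitive
      by (metis (no_types, lifting))
  qed
  moreover have "lists A = (\<Union>n. lists_of_length n)" unfolding lists_of_length_def by auto
  moreover have "|UNIV :: nat set| \<le>o |B|" using B infinite_iff_card_of_nat by blast
  ultimately show ?thesis using card_of_UNION_ordLeq_infinite[OF B] by metis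
qed

lemma card_of_Fpow_ordLeq_infinite:
  assumes "infinite B" "|A| \<le>o |B|"
  shows "|Fpow A| \<le>o |B|"
proof -
  have "Fpow A = set ` lists A"
    unfolding Fpow_def by (auto simp: lists_eq_set image_iff dest: finite_list)
  then show ?thesis
    using card_of_lists_ordLeq_infinite[OF assms] card_of_image ordLeq_transitive by metis
qed

lemma closed_superset_ordLeq_infinite:
  fixes h :: "'a set \<Rightarrow> 'a set" and B :: "'b set"
  assumes B: "infinite B" and S: "|S| \<le>o |B|" and h: "\<And>F. finite F \<Longrightarrow> |h F| \<le>o |B|"
    and S_A: "S \<subseteq> A" and A_closed: "\<And>F. finite F \<Longrightarrow> F \<subseteq> A \<Longrightarrow> h F \<subseteq> A"
  obtains C where "S \<subseteq> C" "C \<subseteq> A" "|C| \<le>o |B|" "\<And>F. finite F \<Longrightarrow> F \<subseteq> C \<Longrightarrow> h F \<subseteq> C"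
proof -
  define stage where "stage = rec_nat S (\<lambda>_ T. T \<union> (\<Union>F\<in>Fpow T. h F))"
  have stage_0: "stage 0 = S" unfolding stage_def by simp
  have stage_Suc: "stage (Suc n) = stage n \<union> (\<Union>F\<in>Fpow (stage n). h F)" for n
    unfolding stage_def by simp
  have stage_mono: "m \<le> n \<Longrightarrow> stage m \<subseteq> stage n" for m n
    by (rule lift_Suc_mono_le[of stage]) (auto simp: stage_Suc)
  have stage_small: "|stage n| \<le>o |B|" for n
  proof (induction n)
    case 0
    show ?case using S by (simp add: stage_0)
  next
    case (Suc n)
    have "\<forall>F\<in>Fpow (stage n). |h F| \<le>o |B|" using h by (simp add: Fpow_def)
    then have "|\<Union>F\<in>Fpow (stage n). h F| \<le>o |B|"
      using card_of_UNION_ordLeq_infinite[OF B card_of_Fpow_ordLeq_infinite[OF B Suc.IH]] by blast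
    then show ?case using card_of_Un_ordLeq_infinite[OF B Suc.IH] by (simp add: stage_Suc)
  qed
  show thesis
  proof
    show "S \<subseteq> (\<Union>n. stage n)" using stage_0 by blast
    have "stage n \<subseteq> A" for n
    proof (induction n)
      case 0
      show ?case using S_A by (simp add: stage_0)
    next
      case (Suc n)
      then show ?case unfolding stage_Suc Fpow_def using A_closed by blast
    qed
    then show "(\<Union>n. stage n) \<subseteq> A" by blast
    have "|UNIV :: nat set| \<le>o |B|" using B infinite_iff_card_of_nat by blast
    then show "|\<Union>n. stage n| \<le>o |B|"
      using card_of_UNION_ordLeq_infinite[OF B] stage_small by blast
  next
    fix F assume F: "finite F" "F \<subseteq> (\<Union>n. stage n)"
    then obtain n where "F \<subseteq> (\<Union>i<n. stage i)" by (rule finite_countable_subset)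
    moreover have "(\<Union>i<n. stage i) \<subseteq> stage n"
      using stage_mono by (meson UN_least lessThan_iff less_imp_le)
    ultimately have "F \<in> Fpow (stage n)" using F(1) by (simp add: Fpow_def)
    then have "h F \<subseteq> stage (Suc n)" unfolding stage_Suc by blast
    then show "h F \<subseteq> (\<Union>n. stage n)" by blast
  qed
qed

definition reflects_lower_bounds :: "'a set \<Rightarrow> ('a \<Rightarrow> 'a \<Rightarrow> bool) \<Rightarrow> 'a set \<Rightarrow> bool" where
  "reflects_lower_bounds P le Q \<longleftrightarrow>
     (\<forall>F. finite F \<and> F \<subseteq> Q \<and> (\<exists>r\<in>P. \<forall>p\<in>F. le r p) \<longrightarrow> (\<exists>r\<in>Q. \<forall>p\<in>F. le r p))"

lemma witness_map_exists:
  assumes D: "\<forall>\<alpha>\<in>omega1. dense P le (D \<alpha>)"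
  obtains h where "\<And>F. finite F \<Longrightarrow> |h F| \<le>o |omega1|" "\<And>F. F \<subseteq> P \<Longrightarrow> h F \<subseteq> P"
    "\<And>\<alpha> p F. \<alpha> \<in> omega1 \<Longrightarrow> p \<in> F \<Longrightarrow> F \<subseteq> P \<Longrightarrow> \<exists>d\<in>h F. d \<in> D \<alpha> \<and> le d p"
    "\<And>F. \<exists>r\<in>P. \<forall>p\<in>F. le r p \<Longrightarrow> \<exists>r\<in>h F. \<forall>p\<in>F. le r p"
proof -
  obtain below where below: "\<And>\<alpha> p. \<alpha> \<in> omega1 \<Longrightarrow> p \<in> P \<Longrightarrow> below \<alpha> p \<in> D \<alpha> \<and> le (below \<alpha> p) p"
    using D unfolding dense_def by metis
  define bounded where "bounded F \<longleftrightarrow> (\<exists>r\<in>P. \<forall>p\<in>F. le r p)" for F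
  have "\<forall>F. \<exists>r. bounded F \<longrightarrow> r \<in> P \<and> (\<forall>p\<in>F. le r p)" unfolding bounded_def by blast
  then obtain lb where lb: "\<And>F. bounded F \<Longrightarrow> lb F \<in> P \<and> (\<forall>p\<in>F. le (lb F) p)"
    by metis
  define h where "h F = (if bounded F then {lb F} else {}) \<union> (\<Union>\<alpha>\<in>omega1. below \<alpha> ` F)" for F
  have h_small: "|h F| \<le>o |omega1|" if "finite F" for F
  proof -
    have "|\<Union>\<alpha>\<in>omega1. below \<alpha> ` F| \<le>o |omega1|"
      using finite_card_of_ordLeq_infinite[OF finite_imageI[OF that] infinite_omega1]
      by (intro card_of_UNION_ordLeq_infinite[OF infinite_omega1 ordLeq_refl[OF card_of_Card_order]]) blast
    then show ?thesis unfolding h_def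
      by (intro card_of_Un_ordLeq_infinite[OF infinite_omega1])
        (simp_all add: finite_card_of_ordLeq_infinite infinite_omega1)
  qed
  have h_P: "h F \<subseteq> P" if "F \<subseteq> P" for F
  proof -
    have "D \<alpha> \<subseteq> P" if "\<alpha> \<in> omega1" for \<alpha> using D that by (simp add: dense_def)
    then have "(\<Union>\<alpha>\<in>omega1. below \<alpha> ` F) \<subseteq> P" using below \<open>F \<subseteq> P\<close> by blast
    then show ?thesis unfolding h_def using lb by simp
  qed
  have h_dense: "\<exists>d\<in>h F. d \<in> D \<alpha> \<and> le d p" if "\<alpha> \<in> omega1" "p \<in> F" "F \<subseteq> P" for \<alpha> p F
    using below[of \<alpha> p] that unfolding h_def by blast
  have h_bound: "\<exists>r\<in>h F. \<forall>p\<in>F. le r p" if "\<exists>r\<in>P. \<forall>p\<in>F. le r p" for F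
    using lb[of F] that unfolding h_def bounded_def by simp
  show thesis using h_small h_P h_dense h_bound by (rule that)
qed

lemma small_reflecting_subposet_exists:
  assumes P: "poset P le" and D: "\<forall>\<alpha>\<in>omega1. dense P le (D \<alpha>)"
  obtains Q where "Q \<subseteq> P" "Q \<noteq> {}" "|Q| \<le>o |omega1|"
    "\<forall>\<alpha>\<in>omega1. dense Q le (D \<alpha> \<inter> Q)" "reflects_lower_bounds P le Q"
proof -
  obtain p0 where p0: "p0 \<in> P" using P unfolding poset_def by blast
  have p0_small: "|{p0}| \<le>o |omega1|" by (simp add: finite_card_of_ordLeq_infinite infinite_omega1)
  obtain h where h_small: "\<And>F. finite F \<Longrightarrow> |h F| \<le>o |omega1|" and h_P: "\<And>F. F \<subseteq> P \<Longrightarrow> h F \<subseteq> P"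
    and h_dense: "\<And>\<alpha> p F. \<alpha> \<in> omega1 \<Longrightarrow> p \<in> F \<Longrightarrow> F \<subseteq> P \<Longrightarrow> \<exists>d\<in>h F. d \<in> D \<alpha> \<and> le d p"
    and h_bound: "\<And>F. \<exists>r\<in>P. \<forall>p\<in>F. le r p \<Longrightarrow> \<exists>r\<in>h F. \<forall>p\<in>F. le r p"
    using witness_map_exists[OF D] by blast
  obtain Q where p0_Q: "{p0} \<subseteq> Q" and Q_P: "Q \<subseteq> P" and Q_small: "|Q| \<le>o |omega1|"
    and Q_closed: "\<And>F. finite F \<Longrightarrow> F \<subseteq> Q \<Longrightarrow> h F \<subseteq> Q"
    using closed_superset_ordLeq_infinite[where h = h and A = P, OF infinite_omega1 p0_small h_small]
      p0 h_P by blast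
  show thesis
  proof
    show "Q \<subseteq> P" "Q \<noteq> {}" "|Q| \<le>o |omega1|" using Q_P p0_Q Q_small by auto
    show "\<forall>\<alpha>\<in>omega1. dense Q le (D \<alpha> \<inter> Q)"
    proof
      fix \<alpha> assume \<alpha>: "\<alpha> \<in> omega1"
      have "\<exists>d\<in>D \<alpha> \<inter> Q. le d p" if "p \<in> Q" for p
        using h_dense[OF \<alpha>, of p "{p}"] Q_closed[of "{p}"] Q_P that by blast
      then show "dense Q le (D \<alpha> \<inter> Q)" unfolding dense_def by blast
    qed
    show "reflects_lower_bounds P le Q"
      unfolding reflects_lower_bounds_def
    proof (intro allI impI)
      fix F assume "finite F \<and> F \<subseteq> Q \<and> (\<exists>r\<in>P. \<forall>p\<in>F. le r p)"
      then show "\<exists>r\<in>Q. \<forall>p\<in>F. le r p" using h_bound[of F] Q_closed[of F] by blast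
    qed
  qed
qed

lemma poset_subset: "poset P le \<Longrightarrow> Q \<subseteq> P \<Longrightarrow> Q \<noteq> {} \<Longrightarrow> poset Q le"
  unfolding poset_def by blast

lemma filter_in_upward_closure:
  assumes P: "poset P le" and Q_P: "Q \<subseteq> P" and G: "filter_in Q le G"
  obtains G' where "filter_in P le G'" "G \<subseteq> G'"
proof
  define G' where "G' = {q \<in> P. \<exists>p\<in>G. le p q}"
  have G_P: "G \<subseteq> P" using G Q_P unfolding filter_in_def by blast
  have trans: "le p r" if "le p q" "le q r" "p \<in> P" "q \<in> P" "r \<in> P" for p q r
    using P that unfolding poset_def by blast
  show "G \<subseteq> G'" using G_P P unfolding G'_def poset_def by blast
  then show "filter_in P le G'"
    unfolding filter_in_def
  proof (intro conjI ballI impI)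
    show "G' \<subseteq> P" unfolding G'_def by blast
    show "G' \<noteq> {}" using \<open>G \<subseteq> G'\<close> G unfolding filter_in_def by blast
  next
    fix p q assume "p \<in> G'" "q \<in> P" "le p q"
    then show "q \<in> G'" unfolding G'_def using trans G_P by blast
  next
    fix q1 q2 assume "q1 \<in> G'" "q2 \<in> G'"
    then obtain p1 p2 where p: "p1 \<in> G" "p2 \<in> G" "le p1 q1" "le p2 q2" "q1 \<in> P" "q2 \<in> P"
      unfolding G'_def by blast
    then obtain r where r: "r \<in> G" "le r p1" "le r p2" using G unfolding filter_in_def by blast
    then have "le r q1" "le r q2" using trans p G_P by blast+
    then show "\<exists>r\<in>G'. le r q1 \<and> le r q2" using r \<open>G \<subseteq> G'\<close> by blast
  qed
qed

lemma MA_aleph1_mono: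
  assumes MA: "MA_aleph1 \<Psi>" and sub: "\<And>P le. \<Phi> P le \<Longrightarrow> \<Psi> P le"
  shows "MA_aleph1 \<Phi>"
  unfolding MA_aleph1_def
proof (intro allI impI)
  fix P le D assume "poset P le \<and> \<Phi> P le" and "\<forall>\<alpha>\<in>omega1. dense P le (D \<alpha>)"
  then show "\<exists>G. filter_in P le G \<and> (\<forall>\<alpha>\<in>omega1. G \<inter> D \<alpha> \<noteq> {})"
    using sub MA[unfolded MA_aleph1_def, rule_format, of P le D] by blast
qed

lemma MA_aleph1_of_small_reflecting_subposets:
  assumes MA: "MA_aleph1 \<Phi>"
    and reflect: "\<And>P le Q. poset P le \<Longrightarrow> \<Psi> P le \<Longrightarrow> Q \<subseteq> P \<Longrightarrow> Q \<noteq> {} \<Longrightarrow>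
      |Q| \<le>o |omega1| \<Longrightarrow> reflects_lower_bounds P le Q \<Longrightarrow> \<Phi> Q le"
  shows "MA_aleph1 \<Psi>"
  unfolding MA_aleph1_def
proof (intro allI impI)
  fix P le D assume P: "poset P le \<and> \<Psi> P le" and D: "\<forall>\<alpha>\<in>omega1. dense P le (D \<alpha>)"
  obtain Q where Q: "Q \<subseteq> P" "Q \<noteq> {}" "|Q| \<le>o |omega1|"
    "\<forall>\<alpha>\<in>omega1. dense Q le (D \<alpha> \<inter> Q)" "reflects_lower_bounds P le Q"
    using small_reflecting_subposet_exists P D by blast
  have "poset Q le \<and> \<Phi> Q le" using poset_subset reflect P Q by blast
  then obtain G where G: "filter_in Q le G" "\<forall>\<alpha>\<in>omega1. G \<inter> (D \<alpha> \<inter> Q) \<noteq> {}"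
    using MA[unfolded MA_aleph1_def, rule_format, of Q le "\<lambda>\<alpha>. D \<alpha> \<inter> Q"] Q(4) by blast
  obtain G' where "filter_in P le G'" "G \<subseteq> G'"
    using filter_in_upward_closure P Q(1) G(1) by blast
  then show "\<exists>G. filter_in P le G \<and> (\<forall>\<alpha>\<in>omega1. G \<inter> D \<alpha> \<noteq> {})" using G(2) by blast
qed

lemma linked_Int_reflecting:
  assumes "linked P le A" "reflects_lower_bounds P le Q"
  shows "linked Q le (A \<inter> Q)"
  unfolding linked_def compatible_def
proof (intro conjI ballI)
  fix p q assume pq: "p \<in> A \<inter> Q" "q \<in> A \<inter> Q"
  then have "\<exists>r\<in>P. \<forall>x\<in>{p, q}. le r x" using assms(1) unfolding linked_def compatible_def by auto
  moreover have "finite {p, q}" "{p, q} \<subseteq> Q" using pq by auto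
  ultimately have "\<exists>r\<in>Q. \<forall>x\<in>{p, q}. le r x" using assms(2) unfolding reflects_lower_bounds_def by blast
  then show "\<exists>r\<in>Q. le r p \<and> le r q" by auto
qed blast

lemma centered_Int_reflecting:
  assumes "centered P le A" "reflects_lower_bounds P le Q"
  shows "centered Q le (A \<inter> Q)"
  unfolding centered_def
proof (intro conjI allI impI)
  fix F assume F: "finite F \<and> F \<subseteq> A \<inter> Q"
  then have "\<exists>r\<in>P. \<forall>p\<in>F. le r p" using assms(1) unfolding centered_def by blast
  then show "\<exists>r\<in>Q. \<forall>p\<in>F. le r p" using assms(2) F unfolding reflects_lower_bounds_def by blast
qed blast

lemma sigma_linked_of_reflecting_subposet:
  assumes "aleph1_sigma_linked P le" "Q \<subseteq> P" "Q \<noteq> {}" "|Q| \<le>o |omega1|"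
    "reflects_lower_bounds P le Q"
  shows "sigma_linked Q le"
proof -
  have "\<exists>p. p ` omega1 = Q" using card_of_ordLeq2[OF assms(3), of omega1] assms(4) by simp
  then obtain p where "p ` omega1 = Q" ..
  then obtain L :: "nat \<Rightarrow> 'a set" where L: "\<forall>n. linked P le (L n)" "Q \<subseteq> (\<Union>n. L n)"
    using assms(1)[unfolded aleph1_sigma_linked_def, rule_format, of p] assms(2) by blast
  have "\<forall>n. linked Q le (L n \<inter> Q)" using linked_Int_reflecting L(1) assms(5) by blast
  moreover have "Q = (\<Union>n. L n \<inter> Q)" using L(2) by blast
  ultimately have "(\<forall>n. linked Q le (L n \<inter> Q)) \<and> Q = (\<Union>n. L n \<inter> Q)" ..
  then show ?thesis unfolding sigma_linked_def by (rule exI[where x = "\<lambda>n. L n \<inter> Q"])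
qed

lemma sigma_centered_of_reflecting_subposet:
  assumes "aleph1_sigma_centered P le" "Q \<subseteq> P" "Q \<noteq> {}" "|Q| \<le>o |omega1|"
    "reflects_lower_bounds P le Q"
  shows "sigma_centered Q le"
proof -
  have "\<exists>p. p ` omega1 = Q" using card_of_ordLeq2[OF assms(3), of omega1] assms(4) by simp
  then obtain p where "p ` omega1 = Q" ..
  then obtain L :: "nat \<Rightarrow> 'a set" where L: "\<forall>n. centered P le (L n)" "Q \<subseteq> (\<Union>n. L n)"
    using assms(1)[unfolded aleph1_sigma_centered_def, rule_format, of p] assms(2) by blast
  have "\<forall>n. centered Q le (L n \<inter> Q)" using centered_Int_reflecting L(1) assms(5) by blast
  moreover have "Q = (\<Union>n. L n \<inter> Q)" using L(2) by blast
  ultimately have "(\<forall>n. centered Q le (L n \<inter> Q)) \<and> Q = (\<Union>n. L n \<inter> Q)" ..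
  then show ?thesis unfolding sigma_centered_def by (rule exI[where x = "\<lambda>n. L n \<inter> Q"])
qed

lemma sigma_linked_imp_aleph1_sigma_linked: "sigma_linked P le \<Longrightarrow> aleph1_sigma_linked P le"
  unfolding sigma_linked_def aleph1_sigma_linked_def by blast

lemma sigma_centered_imp_aleph1_sigma_centered: "sigma_centered P le \<Longrightarrow> aleph1_sigma_centered P le"
  unfolding sigma_centered_def aleph1_sigma_centered_def by blast

lemma MA_aleph1_sigma_linked_iff:
  "MA_aleph1 (sigma_linked :: 'a set \<Rightarrow> _) \<longleftrightarrow> MA_aleph1 (aleph1_sigma_linked :: 'a set \<Rightarrow> _)"
proof
  assume "MA_aleph1 (sigma_linked :: 'a set \<Rightarrow> _)"
  then show "MA_aleph1 (aleph1_sigma_linked :: 'a set \<Rightarrow> _)"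
    by (rule MA_aleph1_of_small_reflecting_subposets) (rule sigma_linked_of_reflecting_subposet)
next
  assume "MA_aleph1 (aleph1_sigma_linked :: 'a set \<Rightarrow> _)"
  then show "MA_aleph1 (sigma_linked :: 'a set \<Rightarrow> _)"
    by (rule MA_aleph1_mono) (rule sigma_linked_imp_aleph1_sigma_linked)
qed

lemma MA_aleph1_sigma_centered_iff:
  "MA_aleph1 (sigma_centered :: 'a set \<Rightarrow> _) \<longleftrightarrow> MA_aleph1 (aleph1_sigma_centered :: 'a set \<Rightarrow> _)"
proof
  assume "MA_aleph1 (sigma_centered :: 'a set \<Rightarrow> _)"
  then show "MA_aleph1 (aleph1_sigma_centered :: 'a set \<Rightarrow> _)"
    by (rule MA_aleph1_of_small_reflecting_subposets) (rule sigma_centered_of_reflecting_subposet)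
next
  assume "MA_aleph1 (aleph1_sigma_centered :: 'a set \<Rightarrow> _)"
  then show "MA_aleph1 (sigma_centered :: 'a set \<Rightarrow> _)"
    by (rule MA_aleph1_mono) (rule sigma_centered_imp_aleph1_sigma_centered)
qed

theorem lemma2:
  "(MA_aleph1 (sigma_linked :: 'a set \<Rightarrow> ('a \<Rightarrow> 'a \<Rightarrow> bool) \<Rightarrow> bool)
      \<longleftrightarrow> MA_aleph1 (aleph1_sigma_linked :: 'a set \<Rightarrow> ('a \<Rightarrow> 'a \<Rightarrow> bool) \<Rightarrow> bool))
   \<and> (MA_aleph1 (sigma_centered :: 'a set \<Rightarrow> ('a \<Rightarrow> 'a \<Rightarrow> bool) \<Rightarrow> bool)
      \<longleftrightarrow> MA_aleph1 (aleph1_sigma_centered :: 'a set \<Rightarrow> ('a \<Rightarrow> 'a \<Rightarrow> bool) \<Rightarrow> bool))"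
  by (simp add: MA_aleph1_sigma_linked_iff MA_aleph1_sigma_centered_iff)

end
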